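(* Assume the setting below and suppose $\tau=0$. Then (with probability one) the iterates $x_k$ converge to a limit $\bar x$ with $\bar x^{(1)}=0$.
   Context: Let $n\ge2$, $a\ge\sqrt{n-1}$, $f(x)=a|x^{(1)}|+\sum_{i=2}^n x^{(i)}$ on $\mathbb{R}^n$ ($x^{(i)}$ the $i$-th coordinate), $0<c_1<c_2<1$, and $\tau=c_1+\frac{(n-1)(c_1-1)}{a^2}$. The initial point $x_0$ is drawn from the normal distribution on $\mathbb{R}^n$ (independently of $a$), and $x_{k+1}=x_k+t_kd_k$, $d_k=-\nabla f(x_k)$, where $t_k$ is returned by the following Armijo–Wolfe bracketing line search: set $\alpha=0$, $\beta=+\infty$, $t=1$; repeat: if $A(t)$ fails set $\beta\leftarrow t$; else if $W(t)$ fails set $\alpha\leftarrow t$; else stop and return $t$; then if $\beta<+\infty$ set $t\leftarrow(\alpha+\beta)/2$, otherwise $t\leftarrow2\alpha$. Here $A(t)$: $f(x_k+td_k)\le f(x_k)+c_1t\nabla f(x_k)^Td_k$, and $W(t)$: $f$ is differentiable at $x_k+td_k$ and $\nabla f(x_k+td_k)^Td_k\ge c_2\nabla f(x_k)^Td_k$. All statements are understood to hold with probability one. *)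

theory Defs
  imports "HOL-Analysis.Analysis" "HOL-Probability.Probability"
begin

text \<open>The objective: f(x) = a |x_j| + sum of the other coordinates, where j is the
  distinguished ("first") coordinate of R^n = real^'n.\<close>
definition fobj :: "real \<Rightarrow> 'n::finite \<Rightarrow> real^'n \<Rightarrow> real" where
  "fobj a j x = a * \<bar>x $ j\<bar> + (\<Sum>i\<in>UNIV - {j}. x $ i)"

definition grad :: "(real^'n \<Rightarrow> real) \<Rightarrow> real^'n \<Rightarrow> real^'n" where
  "grad f x = (THE g. (f has_derivative (\<lambda>h. g \<bullet> h)) (at x))"

definition armijo :: "(real^'n \<Rightarrow> real) \<Rightarrow> real \<Rightarrow> real^'n \<Rightarrow> real^'n \<Rightarrow> real \<Rightarrow> bool" where
  "armijo f c1 x d t \<longleftrightarrow> f (x + t *\<^sub>R d) \<le> f x + c1 * t * (grad f x \<bullet> d)"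

definition wolfe :: "(real^'n \<Rightarrow> real) \<Rightarrow> real \<Rightarrow> real^'n \<Rightarrow> real^'n \<Rightarrow> real \<Rightarrow> bool" where
  "wolfe f c2 x d t \<longleftrightarrow> f differentiable (at (x + t *\<^sub>R d)) \<and>
      grad f (x + t *\<^sub>R d) \<bullet> d \<ge> c2 * (grad f x \<bullet> d)"

text \<open>One pass of the bracketing loop on the state (alpha, beta, t), beta = \<infinity> allowed.
  (Only applied while the stopping test fails.)\<close>
definition ls_step :: "(real^'n \<Rightarrow> real) \<Rightarrow> real \<Rightarrow> real \<Rightarrow> real^'n \<Rightarrow> real^'n \<Rightarrow>
    real \<times> ereal \<times> real \<Rightarrow> real \<times> ereal \<times> real" where
  "ls_step f c1 c2 x d s =
    (let (\<alpha>, \<beta>, t) = s;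
         (\<alpha>', \<beta>') = (if \<not> armijo f c1 x d t then (\<alpha>, ereal t)
                      else if \<not> wolfe f c2 x d t then (t, \<beta>)
                      else (\<alpha>, \<beta>));
         t' = (if \<beta>' < \<infinity> then (\<alpha>' + real_of_ereal \<beta>') / 2 else 2 * \<alpha>')
     in (\<alpha>', \<beta>', t'))"

definition ls_state :: "(real^'n \<Rightarrow> real) \<Rightarrow> real \<Rightarrow> real \<Rightarrow> real^'n \<Rightarrow> real^'n \<Rightarrow>
    nat \<Rightarrow> real \<times> ereal \<times> real" where
  "ls_state f c1 c2 x d m = (ls_step f c1 c2 x d ^^ m) (0, \<infinity>, 1)"

definition ls_trial :: "(real^'n \<Rightarrow> real) \<Rightarrow> real \<Rightarrow> real \<Rightarrow> real^'n \<Rightarrow> real^'n \<Rightarrow> nat \<Rightarrow> real" where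
  "ls_trial f c1 c2 x d m = snd (snd (ls_state f c1 c2 x d m))"

definition ls_terminates :: "(real^'n \<Rightarrow> real) \<Rightarrow> real \<Rightarrow> real \<Rightarrow> real^'n \<Rightarrow> real^'n \<Rightarrow> bool" where
  "ls_terminates f c1 c2 x d \<longleftrightarrow>
     (\<exists>m. armijo f c1 x d (ls_trial f c1 c2 x d m) \<and> wolfe f c2 x d (ls_trial f c1 c2 x d m))"

definition ls_result :: "(real^'n \<Rightarrow> real) \<Rightarrow> real \<Rightarrow> real \<Rightarrow> real^'n \<Rightarrow> real^'n \<Rightarrow> real" where
  "ls_result f c1 c2 x d = ls_trial f c1 c2 x d
     (LEAST m. armijo f c1 x d (ls_trial f c1 c2 x d m) \<and> wolfe f c2 x d (ls_trial f c1 c2 x d m))"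

primrec gd_iter :: "(real^'n \<Rightarrow> real) \<Rightarrow> real \<Rightarrow> real \<Rightarrow> real^'n \<Rightarrow> nat \<Rightarrow> real^'n" where
  "gd_iter f c1 c2 x0 0 = x0"
| "gd_iter f c1 c2 x0 (Suc k) =
     (let x = gd_iter f c1 c2 x0 k; d = - grad f x in x + ls_result f c1 c2 x d *\<^sub>R d)"

definition std_gaussian :: "(real^'n::finite) measure" where
  "std_gaussian = density lborel (\<lambda>x. ennreal (\<Prod>i\<in>UNIV. std_normal_density (x $ i)))"

end

(*
  With tau = 0 the Armijo constant exactly offsets the decrease of the linear part of f along
  -grad f, so at a point x with u = |x^(1)| > 0 a step t satisfies Armijo iff t a <= 2 u and
  Wolfe iff t a > u, i.e. iff it crosses the kink. Put r = u / a. The bracketing search only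
  tries dyadic steps 2^k (k in Z); if r is irrational it therefore returns a dyadic step
  t in (r, 2 r), and the next ratio t - r is again irrational. Consecutive steps are then
  strictly decreasing powers of two, so they at least halve: the iterates form a Cauchy
  sequence, and |x_k^(1)| < a t_k tends to 0. Finally |x_0^(1)| / a is irrational for almost
  every Gaussian starting point.
*)
theory Submission
  imports Defs
begin

lemma inner_vec_remove:
  fixes v w :: "real^'n::finite"
  shows "v \<bullet> w = v $ j * w $ j + (\<Sum>i\<in>UNIV - {j}. v $ i * w $ i)"
  unfolding inner_vec_def by (simp add: sum.remove[of UNIV j])

lemma real_card_UNIV_minus_singleton:
  "real (card (UNIV - {j::'n::finite})) = real CARD('n) - 1"
  by (simp add: card_Diff_singleton of_nat_diff Suc_leI)

lemma card_minus_one_nonneg: "0 \<le> real CARD('n::finite) - 1"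
proof -
  have "1 \<le> CARD('n)" by (simp add: Suc_leI)
  then show ?thesis by simp
qed

definition fobj_gradient :: "real \<Rightarrow> 'n::finite \<Rightarrow> real^'n \<Rightarrow> real^'n" where
  "fobj_gradient a j x = (\<chi> i. if i = j then a * sgn (x $ j) else 1)"

lemma inner_fobj_gradient:
  "fobj_gradient a j x \<bullet> y = a * sgn (x $ j) * y $ j + (\<Sum>i\<in>UNIV - {j}. y $ i)"
  by (simp add: inner_vec_remove[of _ _ j] fobj_gradient_def)

lemma inner_fobj_gradient_fobj_gradient:
  fixes j :: "'n::finite"
  shows "fobj_gradient a j y \<bullet> fobj_gradient a j x =
           a * a * sgn (y $ j) * sgn (x $ j) + (real CARD('n) - 1)"
  by (simp add: inner_fobj_gradient real_card_UNIV_minus_singleton) (simp add: fobj_gradient_def)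

lemma inner_fobj_gradient_self:
  fixes j :: "'n::finite"
  assumes "x $ j \<noteq> 0"
  shows "fobj_gradient a j x \<bullet> fobj_gradient a j x = a * a + (real CARD('n) - 1)"
  using assms by (simp add: inner_fobj_gradient_fobj_gradient sgn_mult[symmetric] sgn_if)

lemma has_derivative_fobj:
  assumes "x $ j \<noteq> 0"
  shows "(fobj a j has_derivative (\<lambda>h. fobj_gradient a j x \<bullet> h)) (at x)"
proof -
  let ?S = "{y. 0 < sgn (x $ j) * y $ j}"
  have "open ?S"
    by (intro open_Collect_less continuous_intros)
  moreover have "x \<in> ?S"
    using assms by (simp add: sgn_mult_self_eq abs_sgn[symmetric] mult.commute)
  moreover have "fobj_gradient a j x \<bullet> y = fobj a j y" if "y \<in> ?S" for y
  proof -
    have "\<bar>y $ j\<bar> = sgn (x $ j) * y $ j"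
      using that by (cases "x $ j > 0") (auto simp: sgn_if abs_if split: if_splits)
    then show ?thesis by (simp add: inner_fobj_gradient fobj_def)
  qed
  moreover have "((\<lambda>y. fobj_gradient a j x \<bullet> y) has_derivative (\<lambda>h. fobj_gradient a j x \<bullet> h)) (at x)"
    by (rule bounded_linear_imp_has_derivative) (rule bounded_linear_inner_right)
  ultimately show ?thesis
    using has_derivative_transform_within_open by blast
qed

lemma differentiable_fobj: "x $ j \<noteq> 0 \<Longrightarrow> fobj a j differentiable (at x)"
  using has_derivative_fobj unfolding differentiable_def by blast

lemma grad_fobj:
  assumes "x $ j \<noteq> 0"
  shows "grad (fobj a j) x = fobj_gradient a j x"
  unfolding grad_def
proof (rule the_equality)
  show "(fobj a j has_derivative (\<lambda>h. fobj_gradient a j x \<bullet> h)) (at x)"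
    by (rule has_derivative_fobj[OF assms])
next
  fix g
  assume "(fobj a j has_derivative (\<lambda>h. g \<bullet> h)) (at x)"
  from has_derivative_unique[OF this has_derivative_fobj[OF assms]]
  have "(g - fobj_gradient a j x) \<bullet> h = 0" for h
    by (metis inner_diff_left right_minus_eq)
  then show "g = fobj_gradient a j x"
    by (metis inner_eq_zero_iff right_minus_eq)
qed

lemma nth_minus_scaleR_fobj_gradient:
  "(x - t *\<^sub>R fobj_gradient a j x) $ j = sgn (x $ j) * (\<bar>x $ j\<bar> - t * a)"
  by (simp add: fobj_gradient_def algebra_simps sgn_if abs_if)

lemma fobj_minus_scaleR_fobj_gradient:
  fixes j :: "'n::finite"
  assumes "x $ j \<noteq> 0"
  shows "fobj a j (x - t *\<^sub>R fobj_gradient a j x) =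
           a * \<bar>\<bar>x $ j\<bar> - t * a\<bar> + (\<Sum>i\<in>UNIV - {j}. x $ i) - t * (real CARD('n) - 1)"
proof -
  have "(\<Sum>i\<in>UNIV - {j}. (x - t *\<^sub>R fobj_gradient a j x) $ i) = (\<Sum>i\<in>UNIV - {j}. x $ i - t)"
    by (intro sum.cong) (auto simp: fobj_gradient_def)
  also have "\<dots> = (\<Sum>i\<in>UNIV - {j}. x $ i) - t * (real CARD('n) - 1)"
    by (simp add: sum_subtractf real_card_UNIV_minus_singleton)
  finally show ?thesis
    unfolding fobj_def nth_minus_scaleR_fobj_gradient using assms by (simp add: abs_mult abs_sgn_eq)
qed

definition dyadic :: "real \<Rightarrow> bool" where
  "dyadic t \<longleftrightarrow> (\<exists>k::int. t = 2 powi k)"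

lemma dyadic_power: "dyadic (2 ^ m)"
  unfolding dyadic_def by (metis power_int_of_nat)

lemma dyadic_inverse_power: "dyadic (1 / 2 ^ m)"
  unfolding dyadic_def by (metis power_int_minus_divide power_int_of_nat)

lemma dyadic_pos: "dyadic t \<Longrightarrow> 0 < t"
  unfolding dyadic_def by auto

lemma dyadic_Rats: "dyadic t \<Longrightarrow> t \<in> \<rat>"
  unfolding dyadic_def by (auto simp: power_int_def)

lemma dyadic_less_imp_le_half:
  assumes "dyadic s" "dyadic t" "s < t"
  shows "s \<le> t / 2"
proof -
  obtain k l :: int where s: "s = 2 powi k" and t: "t = 2 powi l"
    using assms(1,2) unfolding dyadic_def by blast
  have "k < l"
    using assms(3) power_int_increasing[of l k "2::real"] unfolding s t by fastforce
  then have "s \<le> 2 powi (l - 1)"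
    unfolding s by (intro power_int_increasing) auto
  also have "\<dots> = t / 2"
    unfolding t by (simp add: power_int_diff)
  finally show ?thesis .
qed

lemma dyadic_decreasing_le_geometric:
  assumes "\<And>k. dyadic (T k)" and "\<And>k. T (Suc k) < T k"
  shows "T k \<le> T 0 / 2 ^ k"
proof (induction k)
  case (Suc k)
  have "T (Suc k) \<le> T k / 2"
    using assms by (blast intro: dyadic_less_imp_le_half)
  also have "\<dots> \<le> T 0 / 2 ^ k / 2"
    using Suc.IH by simp
  finally show ?case by simp
qed simp

lemma dyadic_bracket_recurrence_le_geometric:
  assumes "\<And>k. dyadic (T k)" and "\<And>k. R k < T k" and "\<And>k. T k < 2 * R k"
    and "\<And>k. R (Suc k) = T k - R k"
  shows "T k \<le> T 0 / 2 ^ k"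
proof -
  have "T (Suc k) < T k" for k
    using assms(2-4)[of k] assms(3)[of "Suc k"] by linarith
  with assms(1) show ?thesis
    by (rule dyadic_decreasing_le_geometric)
qed

lemma convergent_if_dist_Suc_le_geometric:
  fixes X :: "nat \<Rightarrow> 'a::banach"
  assumes "\<And>k. dist (X (Suc k)) (X k) \<le> C / 2 ^ k"
  shows "convergent X"
proof -
  have "summable (\<lambda>k. C * (1 / 2) ^ k :: real)"
    by (intro summable_mult summable_geometric) simp
  then have "summable (\<lambda>k. C / 2 ^ k :: real)"
    by (simp add: power_one_over)
  then have "summable (\<lambda>k. X (Suc k) - X k)"
    by (rule summable_comparison_test') (use assms in \<open>simp add: dist_norm\<close>)
  then have "(\<lambda>n. \<Sum>k<n. X (Suc k) - X k) \<longlonglongrightarrow> suminf (\<lambda>k. X (Suc k) - X k)"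
    by (rule summable_LIMSEQ)
  then have "(\<lambda>n. (X n - X 0) + X 0) \<longlonglongrightarrow> suminf (\<lambda>k. X (Suc k) - X k) + X 0"
    unfolding sum_lessThan_telescope by (intro tendsto_add tendsto_const)
  then show ?thesis
    unfolding convergent_def by auto
qed

lemma ls_state_0 [simp]: "ls_state f c1 c2 x d 0 = (0, \<infinity>, 1)"
  by (simp add: ls_state_def)

lemma ls_state_Suc:
  "ls_state f c1 c2 x d (Suc m) = ls_step f c1 c2 x d (ls_state f c1 c2 x d m)"
  by (simp add: ls_state_def)

lemma ls_trial_doubling:
  assumes "\<And>m. m < K \<Longrightarrow> armijo f c1 x d (2 ^ m) \<and> \<not> wolfe f c2 x d (2 ^ m)"
    and "m \<le> K"
  shows "ls_trial f c1 c2 x d m = 2 ^ m"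
proof -
  have "\<exists>\<alpha>. ls_state f c1 c2 x d m = (\<alpha>, \<infinity>, 2 ^ m)"
    using \<open>m \<le> K\<close>
  proof (induction m)
    case (Suc m)
    then obtain \<alpha> where "ls_state f c1 c2 x d m = (\<alpha>, \<infinity>, 2 ^ m)" by auto
    with assms(1)[of m] Suc.prems show ?case by (simp add: ls_state_Suc ls_step_def)
  qed simp
  then show ?thesis by (auto simp: ls_trial_def)
qed

lemma ls_trial_halving:
  assumes "\<And>m. m < K \<Longrightarrow> \<not> armijo f c1 x d (1 / 2 ^ m)" and "m \<le> K"
  shows "ls_trial f c1 c2 x d m = 1 / 2 ^ m"
proof -
  have "ls_state f c1 c2 x d m = (0, if m = 0 then \<infinity> else ereal (2 / 2 ^ m), 1 / 2 ^ m)"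
    using \<open>m \<le> K\<close>
  proof (induction m)
    case (Suc m)
    with assms(1)[of m] show ?case by (simp add: ls_state_Suc ls_step_def)
  qed simp
  then show ?thesis by (simp add: ls_trial_def)
qed

lemma ls_result_first_success:
  assumes "armijo f c1 x d (ls_trial f c1 c2 x d K) \<and> wolfe f c2 x d (ls_trial f c1 c2 x d K)"
    and "\<And>m. m < K \<Longrightarrow>
           \<not> (armijo f c1 x d (ls_trial f c1 c2 x d m) \<and> wolfe f c2 x d (ls_trial f c1 c2 x d m))"
  shows "ls_terminates f c1 c2 x d \<and> ls_result f c1 c2 x d = ls_trial f c1 c2 x d K"
proof -
  have "(LEAST m. armijo f c1 x d (ls_trial f c1 c2 x d m) \<and>
                  wolfe f c2 x d (ls_trial f c1 c2 x d m)) = K"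
    by (rule Least_equality) (use assms not_less in blast)+
  then show ?thesis
    using assms(1) unfolding ls_terminates_def ls_result_def by auto
qed

(* Only dyadic steps are ever tried, so the search is described by its answers on them. *)
locale bracketed_line_search =
  fixes f :: "real^'n::finite \<Rightarrow> real" and c1 c2 :: real and x d :: "real^'n" and r :: real
  assumes r_pos: "0 < r" and r_irrational: "r \<notin> \<rat>"
    and armijo_iff: "\<And>t. dyadic t \<Longrightarrow> armijo f c1 x d t \<longleftrightarrow> t \<le> 2 * r"
    and wolfe_iff: "\<And>t. dyadic t \<Longrightarrow> wolfe f c2 x d t \<longleftrightarrow> r < t"
begin

lemma dyadic_neq:
  assumes "dyadic t"
  shows "t \<noteq> r" and "t \<noteq> 2 * r"
proof -
  have "t \<in> \<rat>" by (rule dyadic_Rats[OF assms])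
  then show "t \<noteq> r" using r_irrational by auto
  show "t \<noteq> 2 * r"
  proof
    assume "t = 2 * r"
    then have "r = t / 2" by simp
    with \<open>t \<in> \<rat>\<close> r_irrational show False by simp
  qed
qed

lemma ls_result_bracket_large:
  assumes "1 < 2 * r"
  shows "ls_terminates f c1 c2 x d \<and> dyadic (ls_result f c1 c2 x d) \<and>
         r < ls_result f c1 c2 x d \<and> ls_result f c1 c2 x d < 2 * r"
proof -
  define K where "K = (LEAST K::nat. r < 2 ^ K)"
  have above: "r < 2 ^ K"
    unfolding K_def by (rule LeastI_ex) (use real_arch_pow in simp)
  have below: "2 ^ m < r" if "m < K" for m
    using not_less_Least[OF that[unfolded K_def]] dyadic_neq(1)[OF dyadic_power[of m]] by linarith
  have "2 ^ K \<le> 2 * r"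
  proof (cases K)
    case (Suc K')
    with below[of K'] show ?thesis by simp
  qed (use assms in simp)
  then have below_twice: "2 ^ K < 2 * r"
    using dyadic_neq(2)[OF dyadic_power[of K]] by linarith
  have trial: "ls_trial f c1 c2 x d m = 2 ^ m" if "m \<le> K" for m
  proof (rule ls_trial_doubling[OF _ that])
    fix m
    assume "m < K"
    then have "2 ^ m < r" by (rule below)
    with r_pos show "armijo f c1 x d (2 ^ m) \<and> \<not> wolfe f c2 x d (2 ^ m)"
      unfolding armijo_iff[OF dyadic_power] wolfe_iff[OF dyadic_power] by simp
  qed
  have "ls_terminates f c1 c2 x d \<and> ls_result f c1 c2 x d = ls_trial f c1 c2 x d K"
  proof (rule ls_result_first_success)
    show "armijo f c1 x d (ls_trial f c1 c2 x d K) \<and> wolfe f c2 x d (ls_trial f c1 c2 x d K)"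
      unfolding trial[OF order_refl] armijo_iff[OF dyadic_power] wolfe_iff[OF dyadic_power]
      using above below_twice by simp
    fix m
    assume "m < K"
    then show "\<not> (armijo f c1 x d (ls_trial f c1 c2 x d m) \<and>
                  wolfe f c2 x d (ls_trial f c1 c2 x d m))"
      unfolding trial[OF less_imp_le[OF \<open>m < K\<close>]] wolfe_iff[OF dyadic_power]
      using below[OF \<open>m < K\<close>] by simp
  qed
  with above below_twice show ?thesis
    unfolding trial[OF order_refl] using dyadic_power by simp
qed

lemma ls_result_bracket_small:
  assumes "2 * r < 1"
  shows "ls_terminates f c1 c2 x d \<and> dyadic (ls_result f c1 c2 x d) \<and>
         r < ls_result f c1 c2 x d \<and> ls_result f c1 c2 x d < 2 * r"
proof -
  define K where "K = (LEAST K::nat. 1 / 2 ^ K < 2 * r)"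
  have "\<exists>K::nat. 1 / 2 ^ K < 2 * r"
  proof -
    obtain K :: nat where "1 / (2 * r) < 2 ^ K"
      using real_arch_pow[of 2 "1 / (2 * r)"] by auto
    then show ?thesis
      using r_pos by (auto simp: field_simps)
  qed
  then have below: "1 / 2 ^ K < 2 * r"
    unfolding K_def by (rule LeastI_ex)
  have above_twice: "2 * r < 1 / 2 ^ m" if "m < K" for m
    using not_less_Least[OF that[unfolded K_def]] dyadic_neq(2)[OF dyadic_inverse_power[of m]]
    by linarith
  obtain K' where K': "K = Suc K'"
    using below assms by (cases K) auto
  then have above: "r < 1 / 2 ^ K"
    using above_twice[of K'] by (simp add: field_simps)
  have trial: "ls_trial f c1 c2 x d m = 1 / 2 ^ m" if "m \<le> K" for m
  proof (rule ls_trial_halving[OF _ that])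
    fix m
    assume "m < K"
    then show "\<not> armijo f c1 x d (1 / 2 ^ m)"
      unfolding armijo_iff[OF dyadic_inverse_power] using above_twice by fastforce
  qed
  have "ls_terminates f c1 c2 x d \<and> ls_result f c1 c2 x d = ls_trial f c1 c2 x d K"
  proof (rule ls_result_first_success)
    show "armijo f c1 x d (ls_trial f c1 c2 x d K) \<and> wolfe f c2 x d (ls_trial f c1 c2 x d K)"
      unfolding trial[OF order_refl] armijo_iff[OF dyadic_inverse_power]
        wolfe_iff[OF dyadic_inverse_power]
      using above below by simp
    fix m
    assume "m < K"
    then show "\<not> (armijo f c1 x d (ls_trial f c1 c2 x d m) \<and>
                  wolfe f c2 x d (ls_trial f c1 c2 x d m))"
      unfolding trial[OF less_imp_le[OF \<open>m < K\<close>]] armijo_iff[OF dyadic_inverse_power]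
      using above_twice[OF \<open>m < K\<close>] by simp
  qed
  with above below show ?thesis
    unfolding trial[OF order_refl] using dyadic_inverse_power by simp
qed

lemma ls_result_bracket:
  "ls_terminates f c1 c2 x d \<and> dyadic (ls_result f c1 c2 x d) \<and>
   r < ls_result f c1 c2 x d \<and> ls_result f c1 c2 x d < 2 * r"
  using ls_result_bracket_large ls_result_bracket_small dyadic_neq(2)[OF dyadic_power[of 0]]
  by fastforce

end

(* c1_tau_zero is tau = 0 multiplied by a^2. *)
locale fobj_tau_zero =
  fixes a c1 c2 :: real and j :: "'n::finite"
  assumes a_pos: "0 < a"
    and card_le_square: "real CARD('n) - 1 \<le> a * a"
    and c1_tau_zero: "c1 * (a * a + (real CARD('n) - 1)) = real CARD('n) - 1"
    and c2: "0 < c2" "c2 < 1"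
begin

lemma armijo_fobj_iff:
  assumes xj: "x $ j \<noteq> 0" and t: "0 \<le> t"
  shows "armijo (fobj a j) c1 x (- grad (fobj a j) x) t \<longleftrightarrow> t * a \<le> 2 * \<bar>x $ j\<bar>"
proof -
  let ?N = "real CARD('n) - 1" and ?S = "\<Sum>i\<in>UNIV - {j}. x $ i"
  have "fobj a j (x + t *\<^sub>R - grad (fobj a j) x) = a * \<bar>\<bar>x $ j\<bar> - t * a\<bar> + ?S - t * ?N"
    using fobj_minus_scaleR_fobj_gradient[OF xj] by (simp add: grad_fobj[OF xj])
  moreover have "c1 * t * (grad (fobj a j) x \<bullet> - grad (fobj a j) x) = - t * (c1 * (a * a + ?N))"
    by (simp add: grad_fobj[OF xj] inner_fobj_gradient_self[OF xj] algebra_simps)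
  moreover have "fobj a j x = a * \<bar>x $ j\<bar> + ?S"
    by (simp add: fobj_def)
  ultimately have "armijo (fobj a j) c1 x (- grad (fobj a j) x) t \<longleftrightarrow>
             a * \<bar>\<bar>x $ j\<bar> - t * a\<bar> + ?S - t * ?N \<le> a * \<bar>x $ j\<bar> + ?S + - t * ?N"
    unfolding armijo_def c1_tau_zero by (simp only:)
  also have "\<dots> \<longleftrightarrow> \<bar>\<bar>x $ j\<bar> - t * a\<bar> \<le> \<bar>x $ j\<bar>"
    using a_pos by simp
  also have "\<dots> \<longleftrightarrow> t * a \<le> 2 * \<bar>x $ j\<bar>"
    using a_pos t by (auto simp: abs_if)
  finally show ?thesis .
qed

lemma wolfe_fobj_iff:
  assumes xj: "x $ j \<noteq> 0" and kink: "t * a \<noteq> \<bar>x $ j\<bar>"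
  shows "wolfe (fobj a j) c2 x (- grad (fobj a j) x) t \<longleftrightarrow> \<bar>x $ j\<bar> < t * a"
proof -
  let ?N = "real CARD('n) - 1" and ?y = "x - t *\<^sub>R fobj_gradient a j x"
  let ?s = "sgn (\<bar>x $ j\<bar> - t * a)"
  have yj: "?y $ j \<noteq> 0"
    unfolding nth_minus_scaleR_fobj_gradient using xj kink by (simp add: sgn_if)
  have sgn_y: "sgn (?y $ j) * sgn (x $ j) = ?s"
    unfolding nth_minus_scaleR_fobj_gradient using xj by (simp add: sgn_mult sgn_if)
  have point: "x + t *\<^sub>R - grad (fobj a j) x = ?y"
    by (simp add: grad_fobj[OF xj])
  have slope_y: "grad (fobj a j) ?y \<bullet> - grad (fobj a j) x = - (a * a * ?s + ?N)"
    unfolding grad_fobj[OF xj] grad_fobj[OF yj] inner_minus_right inner_fobj_gradient_fobj_gradient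
    by (simp only: mult.assoc sgn_y)
  have slope_x: "grad (fobj a j) x \<bullet> - grad (fobj a j) x = - (a * a + ?N)"
    by (simp add: grad_fobj[OF xj] inner_fobj_gradient_self[OF xj])
  have "wolfe (fobj a j) c2 x (- grad (fobj a j) x) t \<longleftrightarrow>
        - (a * a * ?s + ?N) \<ge> c2 * - (a * a + ?N)"
    unfolding wolfe_def point slope_y slope_x using differentiable_fobj[OF yj] by blast
  also have "\<dots> \<longleftrightarrow> \<bar>x $ j\<bar> < t * a"
  proof (cases "\<bar>x $ j\<bar> < t * a")
    case True
    then have "?s = -1" by simp
    moreover have "c2 * - (a * a + ?N) \<le> 0"
      using c2 card_minus_one_nonneg[where 'n='n] zero_le_square[of a]
      by (intro mult_nonneg_nonpos) linarith+
    ultimately have "c2 * - (a * a + ?N) \<le> - (a * a * ?s + ?N)"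
      using card_le_square by simp
    with True show ?thesis by simp
  next
    case False
    then have "?s = 1" using kink by simp
    moreover have "c2 * (a * a + ?N) < a * a + ?N"
      using c2 card_le_square a_pos by (simp add: mult_less_cancel_right1 add_pos_nonneg)
    ultimately have "\<not> c2 * - (a * a + ?N) \<le> - (a * a * ?s + ?N)"
      by (simp only:)
    with False show ?thesis by simp
  qed
  finally show ?thesis .
qed

lemma gd_step:
  assumes irrational: "\<bar>x $ j\<bar> / a \<notin> \<rat>"
  defines "t \<equiv> ls_result (fobj a j) c1 c2 x (- grad (fobj a j) x)"
  shows "fobj a j differentiable (at x)"
    and "ls_terminates (fobj a j) c1 c2 x (- grad (fobj a j) x)"
    and "dyadic t"
    and "\<bar>x $ j\<bar> / a < t" and "t < 2 * (\<bar>x $ j\<bar> / a)"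
    and "\<bar>(x + t *\<^sub>R - grad (fobj a j) x) $ j\<bar> / a = t - \<bar>x $ j\<bar> / a"
    and "dist (x + t *\<^sub>R - grad (fobj a j) x) x = t * sqrt (a * a + (real CARD('n) - 1))"
proof -
  let ?r = "\<bar>x $ j\<bar> / a"
  have xj: "x $ j \<noteq> 0"
    using irrational by auto
  interpret bracketed_line_search "fobj a j" c1 c2 x "- grad (fobj a j) x" ?r
  proof
    show "0 < ?r" using xj a_pos by simp
    show "?r \<notin> \<rat>" by (rule irrational)
  next
    fix s
    assume "dyadic s"
    then have s: "0 < s" "s \<noteq> ?r"
      using dyadic_pos dyadic_Rats irrational by auto
    then show "armijo (fobj a j) c1 x (- grad (fobj a j) x) s \<longleftrightarrow> s \<le> 2 * ?r"
      using armijo_fobj_iff[OF xj] a_pos by (simp add: field_simps)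
    have "s * a \<noteq> \<bar>x $ j\<bar>"
      using s a_pos by (auto simp: field_simps)
    then show "wolfe (fobj a j) c2 x (- grad (fobj a j) x) s \<longleftrightarrow> ?r < s"
      using wolfe_fobj_iff[OF xj] a_pos by (simp add: field_simps)
  qed
  note bracket = ls_result_bracket[folded t_def]
  show "fobj a j differentiable (at x)"
    by (rule differentiable_fobj[OF xj])
  show "ls_terminates (fobj a j) c1 c2 x (- grad (fobj a j) x)" "dyadic t" "?r < t" "t < 2 * ?r"
    using bracket by auto
  have "t * a > \<bar>x $ j\<bar>"
    using bracket a_pos by (simp add: field_simps)
  then have "\<bar>(x + t *\<^sub>R - grad (fobj a j) x) $ j\<bar> = t * a - \<bar>x $ j\<bar>"
    using nth_minus_scaleR_fobj_gradient[of x t a j] xj by (simp add: grad_fobj[OF xj] abs_mult abs_sgn_eq)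
  then show "\<bar>(x + t *\<^sub>R - grad (fobj a j) x) $ j\<bar> / a = t - ?r"
    using a_pos by (simp add: field_simps)
  have "0 \<le> t"
    using bracket dyadic_pos by (simp add: less_imp_le)
  moreover have "norm (fobj_gradient a j x) = sqrt (a * a + (real CARD('n) - 1))"
    by (simp add: norm_eq_sqrt_inner inner_fobj_gradient_self[OF xj])
  ultimately show "dist (x + t *\<^sub>R - grad (fobj a j) x) x = t * sqrt (a * a + (real CARD('n) - 1))"
    by (simp add: dist_norm grad_fobj[OF xj])
qed

lemma gd_iter_ratio_irrational:
  assumes "\<bar>x0 $ j\<bar> / a \<notin> \<rat>"
  shows "\<bar>gd_iter (fobj a j) c1 c2 x0 k $ j\<bar> / a \<notin> \<rat>"
proof (induction k)
  case (Suc k)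
  let ?x = "gd_iter (fobj a j) c1 c2 x0 k"
  let ?t = "ls_result (fobj a j) c1 c2 ?x (- grad (fobj a j) ?x)"
  have "gd_iter (fobj a j) c1 c2 x0 (Suc k) = ?x + ?t *\<^sub>R - grad (fobj a j) ?x"
    by (simp add: Let_def)
  then have ratio: "\<bar>gd_iter (fobj a j) c1 c2 x0 (Suc k) $ j\<bar> / a = ?t - \<bar>?x $ j\<bar> / a"
    using gd_step(6)[OF Suc.IH] by simp
  have "?t \<in> \<rat>"
    by (rule dyadic_Rats[OF gd_step(3)[OF Suc.IH]])
  show ?case
  proof
    assume "\<bar>gd_iter (fobj a j) c1 c2 x0 (Suc k) $ j\<bar> / a \<in> \<rat>"
    with \<open>?t \<in> \<rat>\<close> have "?t - (?t - \<bar>?x $ j\<bar> / a) \<in> \<rat>"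
      unfolding ratio by (rule Rats_diff)
    with Suc.IH show False by simp
  qed
qed (use assms in simp)

lemma gd_iter_converges:
  assumes "\<bar>x0 $ j\<bar> / a \<notin> \<rat>"
  shows "(\<forall>k. fobj a j differentiable (at (gd_iter (fobj a j) c1 c2 x0 k)) \<and>
              ls_terminates (fobj a j) c1 c2 (gd_iter (fobj a j) c1 c2 x0 k)
                (- grad (fobj a j) (gd_iter (fobj a j) c1 c2 x0 k))) \<and>
         (\<exists>xbar. gd_iter (fobj a j) c1 c2 x0 \<longlonglongrightarrow> xbar \<and> xbar $ j = 0)"
proof -
  define X where "X = gd_iter (fobj a j) c1 c2 x0"
  define T where "T k = ls_result (fobj a j) c1 c2 (X k) (- grad (fobj a j) (X k))" for k
  define R where "R k = \<bar>X k $ j\<bar> / a" for k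
  define B where "B = sqrt (a * a + (real CARD('n) - 1))"
  have irrational: "\<bar>X k $ j\<bar> / a \<notin> \<rat>" for k
    unfolding X_def by (rule gd_iter_ratio_irrational[OF assms])
  have X_Suc: "X (Suc k) = X k + T k *\<^sub>R - grad (fobj a j) (X k)" for k
    by (simp add: X_def T_def Let_def)
  have step: "dyadic (T k)" "R k < T k" "T k < 2 * R k" "R (Suc k) = T k - R k"
    "dist (X (Suc k)) (X k) = B * T k" for k
    unfolding R_def T_def B_def X_Suc using gd_step(3-7)[OF irrational[of k]]
    by (simp_all add: mult.commute)
  have T_le: "T k \<le> T 0 / 2 ^ k" for k
    using step(1-4) by (rule dyadic_bracket_recurrence_le_geometric)
  have "0 \<le> B"
    unfolding B_def using card_minus_one_nonneg[where 'n='n] by simp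
  then have "B * T k \<le> B * T 0 / 2 ^ k" for k
    using mult_left_mono[OF T_le[of k]] by simp
  then have "convergent X"
    using step(5) by (intro convergent_if_dist_Suc_le_geometric) simp
  then obtain xbar where lim: "X \<longlonglongrightarrow> xbar"
    unfolding convergent_def by blast
  have coordinate_le: "norm (X k $ j) \<le> a * T 0 / 2 ^ k" for k
  proof -
    have "norm (X k $ j) = a * R k"
      using a_pos by (simp add: R_def)
    also have "\<dots> \<le> a * T k"
      using step(2)[of k] a_pos by simp
    also have "\<dots> \<le> a * T 0 / 2 ^ k"
      using mult_left_mono[OF T_le[of k]] a_pos by simp
    finally show ?thesis .
  qed
  have "(\<lambda>k. X k $ j) \<longlonglongrightarrow> 0"
    by (rule Lim_null_comparison[OF always_eventually, where g = "\<lambda>k. a * T 0 / 2 ^ k"])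
      (use coordinate_le LIMSEQ_divide_realpow_zero in auto)
  with tendsto_vec_nth[OF lim] have "xbar $ j = 0"
    by (rule LIMSEQ_unique)
  with lim show ?thesis
    using gd_step(1,2)[OF irrational] unfolding X_def by blast
qed

end

lemma AE_std_gaussian_abs_nth_div_notin_Rats:
  fixes j :: "'n::finite"
  assumes "c \<noteq> 0"
  shows "AE x in (std_gaussian :: (real^'n) measure). \<bar>x $ j\<bar> / c \<notin> \<rat>"
proof -
  have "AE x in (lborel :: (real^'n) measure). \<forall>q::rat. x $ j \<noteq> c * of_rat q"
    unfolding AE_all_countable
  proof
    fix q :: rat
    have "axis j (1::real) \<in> Basis" by simp
    from AE_lborel_inner_neq[OF this, of "c * of_rat q"]
    show "AE x in (lborel :: (real^'n) measure). x $ j \<noteq> c * of_rat q"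
      by (simp add: cart_eq_inner_axis)
  qed
  moreover have "\<bar>x $ j\<bar> / c \<notin> \<rat>"
    if avoid: "\<forall>q::rat. x $ j \<noteq> c * of_rat q" for x :: "real^'n"
  proof
    assume "\<bar>x $ j\<bar> / c \<in> \<rat>"
    then obtain q where "\<bar>x $ j\<bar> / c = of_rat q"
      by (auto elim: Rats_cases)
    then have "x $ j = c * of_rat q \<or> x $ j = c * of_rat (- q)"
      using assms by (auto simp: field_simps of_rat_minus abs_if split: if_splits)
    with avoid show False by blast
  qed
  ultimately have "AE x in (lborel :: (real^'n) measure). \<bar>x $ j\<bar> / c \<notin> \<rat>"
    by (rule eventually_mono)
  moreover have "(\<lambda>x::real^'n. ennreal (\<Prod>i\<in>UNIV. std_normal_density (x $ i)))
                   \<in> borel_measurable lborel"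
    by measurable
  ultimately show ?thesis
    unfolding std_gaussian_def by (subst AE_density) auto
qed

theorem corollary2:
  fixes a c1 c2 :: real and j :: "'n::finite"
  assumes "CARD('n) \<ge> 2"
    and "a \<ge> sqrt (real CARD('n) - 1)"
    and "0 < c1" and "c1 < c2" and "c2 < 1"
    and "c1 + (real CARD('n) - 1) * (c1 - 1) / a\<^sup>2 = 0"
  shows "AE x0 in (std_gaussian :: (real^'n) measure).
           (\<forall>k. fobj a j differentiable (at (gd_iter (fobj a j) c1 c2 x0 k)) \<and>
                ls_terminates (fobj a j) c1 c2 (gd_iter (fobj a j) c1 c2 x0 k)
                   (- grad (fobj a j) (gd_iter (fobj a j) c1 c2 x0 k))) \<and>
           (\<exists>xbar. gd_iter (fobj a j) c1 c2 x0 \<longlonglongrightarrow> xbar \<and> xbar $ j = 0)"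
proof -
  let ?N = "real CARD('n) - 1"
  have sqrt_N: "1 \<le> sqrt ?N"
    using assms(1) by simp
  then have a_pos: "0 < a"
    using assms(2) by linarith
  have "sqrt ?N * sqrt ?N \<le> a * a"
    using assms(2) sqrt_N a_pos by (intro mult_mono) auto
  then have "?N \<le> a * a"
    using assms(1) by simp
  moreover have "c1 * (a * a + ?N) = ?N"
    using assms(6) a_pos by (simp add: field_simps power2_eq_square)
  ultimately interpret fobj_tau_zero a c1 c2 j
    using a_pos assms(3-5) by unfold_locales auto
  have "a \<noteq> 0"
    using a_pos by simp
  show ?thesis
    using AE_std_gaussian_abs_nth_div_notin_Rats[OF \<open>a \<noteq> 0\<close>, of j]
    by (rule eventually_mono) (rule gd_iter_converges)
qed

end
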